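(* Let $c$ be a parameter and let $$\Psi(x,\hbar):=\sum_{j\ge0}s_{(j)}(\tilde{\mathbf t}/\hbar)\,e^{\frac\hbar2j(j-1)}x^j\quad\text{with }\tilde t_k=c^{k-1}\ (k\ge1).$$ Then, with $\hat x=x\cdot$, $\hat y=\hbar x\frac{\partial}{\partial x}$, $$\Big(\frac{\hat xe^{\hat y}}{(1-c\,\hat xe^{\hat y})^2}-\hat y\Big)\Psi=0\quad\text{and}\quad\Big(1-\big(e^{-\hat y}\hat x^{-1}-2c+c^2\hat xe^{\hat y}\big)\hat y\Big)\Psi(x,\hbar)=0.$$ For $c=0$ this reduces to $(e^{-\hat y}\hat x^{-1}\hat y-1)\Psi=0$ for the wave function of single Hurwitz numbers.
   Context: $s_{(j)}$ is defined by $\exp(\sum_{m\ge1}t_mx^m)=\sum_{j\ge0}s_{(j)}(\mathbf t)x^j$ and $\tilde{\mathbf t}/\hbar=(\tilde t_1/\hbar,\tilde t_2/\hbar,\dots)$. The operator $(1-c\hat xe^{\hat y})^{-2}$ is expanded as a power series in $c\hat xe^{\hat y}$; $e^{\pm\hat y}$ acts on $x^m$ by multiplication by $e^{\pm\hbar m}$; all series are formal in $x,\hbar,c$. *)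

theory Defs
  imports Complex_Main "HOL-Computational_Algebra.Formal_Power_Series"
begin

definition schur_h :: "(nat \<Rightarrow> complex) \<Rightarrow> nat \<Rightarrow> complex" where
  "schur_h t j = fps_nth (fps_compose (fps_exp 1) (Abs_fps (\<lambda>m. if m = 0 then 0 else t m))) j"

definition Psi :: "complex \<Rightarrow> complex \<Rightarrow> complex fps" where
  "Psi c h = Abs_fps (\<lambda>j. schur_h (\<lambda>k. c ^ (k - 1) / h) j
                         * exp (h / 2 * of_nat j * (of_nat j - 1)))"

text \<open>Operators: xhat = multiplication by x, yhat = hbar x d/dx,
  e^{yhat} and e^{-yhat} act on x^m by exp(+-hbar m), xhat^{-1} = division by x
  (only applied to series with vanishing constant term).\<close>
definition xop :: "complex fps \<Rightarrow> complex fps" where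
  "xop f = fps_X * f"

definition xinvop :: "complex fps \<Rightarrow> complex fps" where
  "xinvop f = fps_shift 1 f"

definition yop :: "complex \<Rightarrow> complex fps \<Rightarrow> complex fps" where
  "yop h f = Abs_fps (\<lambda>m. h * of_nat m * fps_nth f m)"

definition eyop :: "complex \<Rightarrow> complex fps \<Rightarrow> complex fps" where
  "eyop h f = Abs_fps (\<lambda>m. exp (h * of_nat m) * fps_nth f m)"

definition emyop :: "complex \<Rightarrow> complex fps \<Rightarrow> complex fps" where
  "emyop h f = Abs_fps (\<lambda>m. exp (- h * of_nat m) * fps_nth f m)"

definition Aop :: "complex \<Rightarrow> complex fps \<Rightarrow> complex fps" where
  "Aop h f = xop (eyop h f)"

text \<open>(1 - c A)^{-2} = sum_{n>=0} (n+1) (c A)^n; A raises x-degree by one,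
  so the coefficient of x^N is a finite sum.\<close>
definition invsq_op :: "complex \<Rightarrow> complex \<Rightarrow> complex fps \<Rightarrow> complex fps" where
  "invsq_op c h f = Abs_fps (\<lambda>N. \<Sum>n\<le>N. of_nat (n + 1) * c ^ n * fps_nth (((Aop h) ^^ n) f) N)"

end

theory Submission
  imports Defs
begin

unbundle fps_syntax

text \<open>Write Psi = sum_j S_j q_j x^j with S = exp(sum_{m>=1} c^(m-1) x^m / h) and
  q_j = exp(h j (j-1) / 2). Since q_(j+1) = exp(h j) q_j, twisting by q turns xhat e^yhat into plain
  multiplication by x and e^-yhat xhat^-1 into division by x, while it commutes with
  yhat = h x d/dx. Both equations thereby reduce to the differential equation
  h S' = (1 - c x)^-2 S.\<close>

definition twist_factor :: "complex \<Rightarrow> nat \<Rightarrow> complex" where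
  "twist_factor h j = exp (h / 2 * of_nat j * (of_nat j - 1))"

definition twist :: "complex \<Rightarrow> complex fps \<Rightarrow> complex fps" where
  "twist h f = Abs_fps (\<lambda>j. f $ j * twist_factor h j)"

lemma twist_factor_Suc: "twist_factor h (Suc j) = exp (h * of_nat j) * twist_factor h j"
proof -
  have "h / 2 * of_nat (Suc j) * (of_nat (Suc j) - 1) = h * of_nat j + h / 2 * of_nat j * (of_nat j - 1)"
    by (simp add: field_simps)
  then show ?thesis by (simp only: twist_factor_def exp_add)
qed

lemma twist_nth [simp]: "twist h f $ j = f $ j * twist_factor h j"
  by (simp add: twist_def)

lemma twist_diff: "twist h (f - g) = twist h f - twist h g"
  by (intro fps_ext) (simp add: algebra_simps)

lemma twist_add: "twist h (f + g) = twist h f + twist h g"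
  by (intro fps_ext) (simp add: algebra_simps)

lemma twist_const_mult: "twist h (fps_const a * f) = fps_const a * twist h f"
  by (intro fps_ext) simp

lemma yop_eq_X_deriv: "yop h f = fps_X * (fps_const h * fps_deriv f)"
  by (intro fps_ext) (simp add: yop_def fps_X_mult_nth)

lemma yop_twist: "yop h (twist h f) = twist h (yop h f)"
  by (intro fps_ext) (simp add: yop_def)

lemma Aop_twist: "Aop h (twist h f) = twist h (fps_X * f)"
  by (intro fps_ext) (auto simp: Aop_def xop_def eyop_def fps_X_mult_nth twist_factor_Suc
      gr0_conv_Suc)

lemma emyop_xinvop_twist: "emyop h (xinvop (twist h f)) = twist h (xinvop f)"
  by (intro fps_ext)
     (simp add: emyop_def xinvop_def twist_factor_Suc exp_minus field_simps del: of_nat_Suc)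

lemma xinvop_X_mult: "xinvop (fps_X * f) = f"
  unfolding xinvop_def mult.commute[of fps_X] by (rule fps_shift_times_fps_X')

lemma Aop_power_twist: "((Aop h) ^^ n) (twist h f) = twist h (fps_X ^ n * f)"
  by (induction n) (simp_all add: Aop_twist mult.assoc)

definition invsq_fps :: "complex \<Rightarrow> complex fps" where
  "invsq_fps c = Abs_fps (\<lambda>n. of_nat (n + 1) * c ^ n)"

lemma invsq_op_twist: "invsq_op c h (twist h f) = twist h (invsq_fps c * f)"
proof (rule fps_ext)
  fix N
  have "invsq_op c h (twist h f) $ N = (\<Sum>n\<le>N. of_nat (n + 1) * c ^ n * f $ (N - n)) * twist_factor h N"
    by (simp add: invsq_op_def Aop_power_twist fps_X_power_mult_nth sum_distrib_right mult.assoc)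
  also have "\<dots> = twist h (invsq_fps c * f) $ N"
    by (simp add: fps_mult_nth atMost_atLeast0 invsq_fps_def)
  finally show "invsq_op c h (twist h f) $ N = twist h (invsq_fps c * f) $ N" .
qed

lemma one_minus_square: "(1 - fps_const (c :: 'a :: comm_ring_1) * fps_X) ^ 2 * g
   = g - fps_const (2 * c) * (fps_X * g) + fps_const (c ^ 2) * (fps_X * (fps_X * g))"
proof -
  have "fps_const (2 * c) = 2 * fps_const c" "fps_const (c ^ 2) = fps_const c ^ 2"
    by (simp_all add: numeral_fps_const)
  then show ?thesis
    by (simp only:) (simp add: power2_eq_square algebra_simps del: fps_const_mult fps_const_power)
qed

lemma invsq_fps_mult_square: "(1 - fps_const c * fps_X) ^ 2 * invsq_fps c = 1"
proof (rule fps_ext)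
  fix n
  have "of_nat (k + 3) * c ^ (k + 2) - 2 * c * (of_nat (k + 2) * c ^ (k + 1))
      + c ^ 2 * (of_nat (k + 1) * c ^ k) = 0" for k
    by (simp add: algebra_simps power2_eq_square)
  then show "((1 - fps_const c * fps_X) ^ 2 * invsq_fps c) $ n = 1 $ n"
    unfolding one_minus_square
    by (cases n; cases "n - 1") (auto simp: invsq_fps_def eval_nat_numeral fps_X_mult_nth)
qed

definition time_series :: "complex \<Rightarrow> complex \<Rightarrow> complex fps" where
  "time_series c h = Abs_fps (\<lambda>m. if m = 0 then 0 else c ^ (m - 1) / h)"

definition schur_series :: "complex \<Rightarrow> complex \<Rightarrow> complex fps" where
  "schur_series c h = fps_exp 1 oo time_series c h"

lemma Psi_eq_twist: "Psi c h = twist h (schur_series c h)"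
proof (rule fps_ext)
  fix j
  have "schur_h (\<lambda>k. c ^ (k - 1) / h) j = schur_series c h $ j"
    unfolding schur_h_def schur_series_def time_series_def by (rule refl)
  then show "Psi c h $ j = twist h (schur_series c h) $ j"
    by (simp add: Psi_def twist_factor_def)
qed

lemma deriv_schur_series:
  assumes "h \<noteq> 0"
  shows "fps_const h * fps_deriv (schur_series c h) = invsq_fps c * schur_series c h"
proof -
  have "fps_const h * fps_deriv (time_series c h) = invsq_fps c"
    using assms by (intro fps_ext) (simp add: time_series_def invsq_fps_def)
  moreover have "fps_deriv (schur_series c h) = schur_series c h * fps_deriv (time_series c h)"
    by (simp add: schur_series_def fps_compose_deriv time_series_def)
  ultimately show ?thesis by (metis mult.commute mult.left_commute)
qed

lemma yop_Psi:
  assumes "h \<noteq> 0"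
  shows "yop h (Psi c h) = twist h (fps_X * (invsq_fps c * schur_series c h))"
  unfolding Psi_eq_twist yop_twist unfolding yop_eq_X_deriv deriv_schur_series[OF assms] ..

lemma Aop_invsq_op_Psi:
  assumes "h \<noteq> 0"
  shows "Aop h (invsq_op c h (Psi c h)) = yop h (Psi c h)"
  unfolding yop_Psi[OF assms] unfolding Psi_eq_twist invsq_op_twist Aop_twist
  by (simp only: mult.assoc)

lemma Psi_eq_yop_combination:
  assumes "h \<noteq> 0"
  shows "Psi c h = emyop h (xinvop (yop h (Psi c h))) - fps_const (2 * c) * yop h (Psi c h)
                   + fps_const (c\<^sup>2) * Aop h (yop h (Psi c h))"
proof -
  define D where "D = invsq_fps c * schur_series c h"
  have "schur_series c h = (1 - fps_const c * fps_X) ^ 2 * D"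
    by (simp add: D_def invsq_fps_mult_square flip: mult.assoc)
  also have "\<dots> = D - fps_const (2 * c) * (fps_X * D) + fps_const (c\<^sup>2) * (fps_X * (fps_X * D))"
    by (rule one_minus_square)
  finally have expand: "schur_series c h = \<dots>" .
  have yop_Psi_D: "yop h (Psi c h) = twist h (fps_X * D)"
    unfolding D_def by (rule yop_Psi[OF assms])
  show ?thesis
    unfolding yop_Psi_D unfolding Psi_eq_twist expand
    by (simp add: emyop_xinvop_twist xinvop_X_mult Aop_twist twist_diff twist_add twist_const_mult)
qed

theorem mainTheorem12:
  fixes c h :: complex
  assumes "h \<noteq> 0"
  shows "Aop h (invsq_op c h (Psi c h)) - yop h (Psi c h) = 0
     \<and> Psi c h - (emyop h (xinvop (yop h (Psi c h))) - fps_const (2 * c) * yop h (Psi c h)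
                   + fps_const (c\<^sup>2) * Aop h (yop h (Psi c h))) = 0
     \<and> emyop h (xinvop (yop h (Psi 0 h))) - Psi 0 h = 0"
  using Aop_invsq_op_Psi[OF assms, of c] Psi_eq_yop_combination[OF assms, of c]
    Psi_eq_yop_combination[OF assms, of 0]
  by simp

end
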